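(* There is a $32$-point code in $\mathrm{SO}(4)$ which is a subgroup of $\mathrm{SO}(4)$, is universally optimal, and whose points form the vertices of a regular cross polytope in the sphere $\{X\in\mathbb{R}^{4\times 4}: \|X\|_F=2\}\cong S^{15}$ (i.e., the $32$ points consist of $16$ antipodal pairs, and any two points not antipodal to each other are orthogonal with respect to the Frobenius inner product).
   Context: $\mathrm{SO}(n)$ carries the chordal distance $d_c(U_1,U_2)=\|U_1-U_2\|_F$, from the embedding $\mathrm{SO}(n)\subset\mathbb{R}^{n\times n}$; every element of $\mathrm{SO}(4)$ has Frobenius norm $2$. A code is a finite subset. A function $g:(0,\infty)\to\mathbb{R}$ is completely monotonic if it is smooth and $(-1)^kg^{(k)}\ge0$ for all $k\ge 0$. A code $\mathcal{C}\subset\mathrm{SO}(n)$ is universally optimal if for every completely monotonic $g$ it minimizes $\sum_{x\ne y\in\mathcal{C}} g(d_c(x,y)^2)$ among all codes in $\mathrm{SO}(n)$ of the same size. *)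

theory Defs
  imports "HOL-Analysis.Analysis"
begin

text \<open>SO(4) as 4x4 real matrices; the norm on real^4^4 is the Frobenius norm,
  and the inner product is the Frobenius inner product.\<close>
definition SO4 :: "(real^4^4) set" where
  "SO4 = {U. transpose U ** U = mat 1 \<and> det U = 1}"

definition completely_monotonic :: "(real \<Rightarrow> real) \<Rightarrow> bool" where
  "completely_monotonic g \<longleftrightarrow>
     (\<forall>k::nat. \<forall>x>0. ((deriv ^^ k) g has_real_derivative (deriv ^^ Suc k) g x) (at x)
                    \<and> (-1) ^ k * (deriv ^^ k) g x \<ge> 0)"

definition chordal_dist :: "real^4^4 \<Rightarrow> real^4^4 \<Rightarrow> real" where
  "chordal_dist U V = norm (U - V)"

definition energy :: "(real \<Rightarrow> real) \<Rightarrow> (real^4^4) set \<Rightarrow> real" where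
  "energy g C = (\<Sum>(x, y) \<in> {(x, y). x \<in> C \<and> y \<in> C \<and> x \<noteq> y}. g ((chordal_dist x y)\<^sup>2))"

definition universally_optimal :: "(real^4^4) set \<Rightarrow> bool" where
  "universally_optimal C \<longleftrightarrow> C \<subseteq> SO4 \<and> finite C \<and>
     (\<forall>g. completely_monotonic g \<longrightarrow>
        (\<forall>D. D \<subseteq> SO4 \<and> finite D \<and> card D = card C \<longrightarrow> energy g C \<le> energy g D))"

end

theory Submission
  imports Defs
begin

text \<open>The 32 maps \<open>x \<mapsto> a x b\<close> of the quaternions \<open>\<bbbH> = \<real>\<^sup>4\<close>, with \<open>a, b\<close> in the quaternion
  group \<open>Q\<^sub>8\<close>, form a subgroup of SO(4) in which any two elements are orthogonal or antipodal.
  Universal optimality is a linear programming bound. On the sphere, the squared distance is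
  \<open>8 - 2t\<close> with \<open>t = \<langle>x,y\<rangle>\<close>, and since \<open>g''' \<le> 0\<close>, \<open>g (8 - 2t)\<close> lies above the quadratic \<open>H t\<close>
  agreeing with it to first order at \<open>t = 0\<close> and in value at \<open>t = -4\<close>. Summing \<open>H\<close> over all
  pairs of a 32-point code, the linear term is controlled by \<open>\<parallel>\<Sum>x\<parallel>\<^sup>2 \<ge> 0\<close> and the quadratic
  one by the frame potential bound \<open>\<Sum>\<langle>x,y\<rangle>\<^sup>2 \<ge> (\<Sum>\<parallel>x\<parallel>\<^sup>2)\<^sup>2 / 16\<close>. The cross polytope, whose
  inner products are only \<open>0\<close> and \<open>-4\<close>, attains equality in every step.\<close>

lemma antimono_deriv_below_tangent:
  fixes f f' :: "real \<Rightarrow> real"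
  assumes deriv: "\<And>t. t \<in> {l..u} \<Longrightarrow> (f has_real_derivative f' t) (at t)"
    and antimono: "\<And>s t. s \<in> {l..u} \<Longrightarrow> t \<in> {l..u} \<Longrightarrow> s \<le> t \<Longrightarrow> f' t \<le> f' s"
    and x: "x \<in> {l..u}" and y: "y \<in> {l..u}"
  shows "f y \<le> f x + f' x * (y - x)"
proof -
  define h where "h t = f t - f' x * t" for t
  have h_deriv: "(h has_real_derivative f' t - f' x) (at t)" if "t \<in> {l..u}" for t
    unfolding h_def using deriv[OF that] by (auto intro!: derivative_eq_intros)
  have "h y \<le> h x"
  proof (cases "x \<le> y")
    case True
    have "- h x \<le> - h y"
      using True x y by (intro deriv_nonneg_imp_mono[of x y "\<lambda>t. - h t" "\<lambda>t. f' x - f' t"])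
        (auto intro!: derivative_eq_intros h_deriv antimono)
    then show ?thesis by simp
  next
    case False
    show ?thesis
      using False x y by (intro deriv_nonneg_imp_mono[of y x h "\<lambda>t. f' t - f' x"])
        (auto intro!: h_deriv antimono)
  qed
  then show ?thesis by (simp add: h_def algebra_simps)
qed

text \<open>\<open>\<phi>'\<close> is concave and vanishes at \<open>a\<close>, so it changes sign at most once more in \<open>(a, b]\<close>,
  from \<open>+\<close> to \<open>-\<close>; hence \<open>\<phi> \<ge> min (\<phi> a) (\<phi> b)\<close> there, while \<open>\<phi>'' a \<ge> 0\<close> makes \<open>\<phi>\<close>
  nonincreasing on \<open>[l, a]\<close>.\<close>

lemma hermite_remainder_nonneg:
  fixes \<phi> \<phi>' \<phi>'' :: "real \<Rightarrow> real"
  assumes deriv: "\<And>t. t \<in> {l..b} \<Longrightarrow> (\<phi> has_real_derivative \<phi>' t) (at t)"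
    and deriv2: "\<And>t. t \<in> {l..b} \<Longrightarrow> (\<phi>' has_real_derivative \<phi>'' t) (at t)"
    and antimono: "\<And>s t. s \<in> {l..b} \<Longrightarrow> t \<in> {l..b} \<Longrightarrow> s \<le> t \<Longrightarrow> \<phi>'' t \<le> \<phi>'' s"
    and a: "l \<le> a" "a < b" and s: "l \<le> s" "s \<le> b"
    and zeros: "\<phi> a = 0" "\<phi>' a = 0" "\<phi> b = 0"
  shows "\<phi> s \<ge> 0"
proof -
  have tangent: "\<phi>' y \<le> \<phi>' x + \<phi>'' x * (y - x)" if "x \<in> {l..b}" "y \<in> {l..b}" for x y
    using antimono_deriv_below_tangent[OF deriv2 antimono that] .
  have nonincr: "\<phi> y \<le> \<phi> x"
    if xy: "l \<le> x" "x \<le> y" "y \<le> b" and neg: "\<And>t. t \<in> {x..y} \<Longrightarrow> \<phi>' t \<le> 0" for x y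
  proof -
    have "- \<phi> x \<le> - \<phi> y"
    proof (rule deriv_nonneg_imp_mono[of x y _ "\<lambda>t. - \<phi>' t"])
      fix t assume t: "t \<in> {x..y}"
      show "((\<lambda>t. - \<phi> t) has_real_derivative - \<phi>' t) (at t)"
        using xy t by (intro DERIV_minus deriv) simp
      show "- \<phi>' t \<ge> 0"
        using neg[OF t] by simp
    qed (fact xy(2))
    then show ?thesis by simp
  qed
  have curv_a: "\<phi>'' a \<ge> 0"
  proof (rule ccontr)
    assume "\<not> \<phi>'' a \<ge> 0"
    then have pos: "0 < - \<phi>'' a * (b - a)\<^sup>2 / 2"
      using a by (intro divide_pos_pos mult_pos_pos) simp_all
    define \<psi> where "\<psi> t = \<phi> t - \<phi>'' a * (t - a)\<^sup>2 / 2" for t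
    have "- \<psi> a \<le> - \<psi> b"
    proof (rule deriv_nonneg_imp_mono[of a b _ "\<lambda>t. \<phi>'' a * (t - a) - \<phi>' t"])
      fix t assume t: "t \<in> {a..b}"
      then have "(\<phi> has_real_derivative \<phi>' t) (at t)"
        using a by (intro deriv) simp
      then show "((\<lambda>t. - \<psi> t) has_real_derivative \<phi>'' a * (t - a) - \<phi>' t) (at t)"
        unfolding \<psi>_def by (auto intro!: derivative_eq_intros)
      show "\<phi>'' a * (t - a) - \<phi>' t \<ge> 0"
        using tangent[of a t] t a zeros by simp
    qed (use a in simp)
    moreover have "\<psi> a = 0" "\<psi> b = - \<phi>'' a * (b - a)\<^sup>2 / 2"
      by (simp_all add: \<psi>_def zeros)
    ultimately show False
      using pos by linarith
  qed
  show ?thesis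
  proof (cases "s \<le> a")
    case True
    have "\<phi>' t \<le> \<phi>' a" if t: "t \<in> {s..a}" for t
    proof (rule deriv_nonneg_imp_mono[of t a \<phi>' \<phi>''])
      fix u assume u: "u \<in> {t..a}"
      show "(\<phi>' has_real_derivative \<phi>'' u) (at u)"
        using u t s a by (intro deriv2) simp
      show "\<phi>'' u \<ge> 0"
        using curv_a antimono[of u a] u t s a by simp
    qed (use t in simp)
    then show ?thesis
      using nonincr[of s a] True s a zeros by simp
  next
    case False
    show ?thesis
    proof (cases "\<forall>t\<in>{a..s}. \<phi>' t \<ge> 0")
      case True
      have "\<phi> a \<le> \<phi> s"
        using True False a s by (intro deriv_nonneg_imp_mono[of a s \<phi> \<phi>'] deriv) simp_all
      then show ?thesis
        using zeros by simp
    next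
      case False
      then obtain y where y: "y \<in> {a..s}" "\<phi>' y < 0" by auto
      have "\<phi>'' y * (y - a) < 0"
        using tangent[of y a] y a s zeros by (simp add: algebra_simps)
      then have "\<phi>'' y < 0"
        using y by (simp add: mult_less_0_iff)
      have "\<phi>' t \<le> 0" if "t \<in> {s..b}" for t
      proof -
        have "\<phi>'' y * (t - y) \<le> 0"
          using \<open>\<phi>'' y < 0\<close> y that by (intro mult_nonpos_nonneg) auto
        then show ?thesis
          using tangent[of y t] y that a s by simp
      qed
      then show ?thesis
        using nonincr[of s b] s zeros by simp
    qed
  qed
qed

lemma completely_monotonicD:
  assumes "completely_monotonic g" "x > 0"
  shows "((deriv ^^ k) g has_real_derivative (deriv ^^ Suc k) g x) (at x)"
    and "(-1) ^ k * (deriv ^^ k) g x \<ge> 0"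
  using assms unfolding completely_monotonic_def by blast+

lemma completely_monotonic_derivs:
  assumes "completely_monotonic g" "x > 0"
  shows "(g has_real_derivative deriv g x) (at x)"
    and "(deriv g has_real_derivative deriv (deriv g) x) (at x)"
    and "(deriv (deriv g) has_real_derivative deriv (deriv (deriv g)) x) (at x)"
    and "deriv g x \<le> 0" "deriv (deriv g) x \<ge> 0" "deriv (deriv (deriv g)) x \<le> 0"
  using completely_monotonicD[OF assms, of 0] completely_monotonicD[OF assms, of 1]
    completely_monotonicD[OF assms, of 2] completely_monotonicD[OF assms, of 3]
  by (simp_all add: numeral_2_eq_2 numeral_3_eq_3)

lemma completely_monotonic_above_tangent:
  assumes cm: "completely_monotonic g" and a: "0 < a" "a \<le> s"
  shows "g a + deriv g a * (s - a) \<le> g s"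
proof -
  have "- g s \<le> - g a + - deriv g a * (s - a)"
  proof (rule antimono_deriv_below_tangent[of a s])
    fix t assume "t \<in> {a..s}"
    then have "t > 0" using a by simp
    then show "((\<lambda>t. - g t) has_real_derivative - deriv g t) (at t)"
      by (intro DERIV_minus completely_monotonic_derivs(1)[OF cm])
  next
    fix t u assume tu: "t \<in> {a..s}" "u \<in> {a..s}" "t \<le> u"
    have "deriv g t \<le> deriv g u"
    proof (rule deriv_nonneg_imp_mono[of t u _ "deriv (deriv g)"])
      fix v assume "v \<in> {t..u}"
      then have "v > 0" using a tu by simp
      then show "(deriv g has_real_derivative deriv (deriv g) v) (at v)" "deriv (deriv g) v \<ge> 0"
        using completely_monotonic_derivs(2,5)[OF cm] by blast+
    qed (fact tu(3))
    then show "- deriv g u \<le> - deriv g t" by simp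
  qed (use a in simp_all)
  then show ?thesis by simp
qed

lemma completely_monotonic_ge_hermite:
  assumes cm: "completely_monotonic g" and ab: "0 < a" "a < b" and s: "0 < s" "s \<le> b"
  defines "\<kappa> \<equiv> (g b - g a - deriv g a * (b - a)) / (b - a)\<^sup>2"
  shows "g a + deriv g a * (s - a) + \<kappa> * (s - a)\<^sup>2 \<le> g s"
proof -
  define \<phi> where "\<phi> t = g t - (g a + deriv g a * (t - a) + \<kappa> * (t - a)\<^sup>2)" for t
  define \<phi>' where "\<phi>' t = deriv g t - deriv g a - 2 * \<kappa> * (t - a)" for t
  define \<phi>'' where "\<phi>'' t = deriv (deriv g) t - 2 * \<kappa>" for t
  define l where "l = min s a"
  have l: "0 < l" "l \<le> a" "l \<le> s" using ab s by (auto simp: l_def)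
  have "\<phi> s \<ge> 0"
  proof (rule hermite_remainder_nonneg[of l b \<phi> \<phi>' \<phi>'' a])
    fix t assume "t \<in> {l..b}"
    then have t: "t > 0" using l by auto
    show "(\<phi> has_real_derivative \<phi>' t) (at t)"
      unfolding \<phi>_def \<phi>'_def
      using completely_monotonic_derivs(1)[OF cm t] by (auto intro!: derivative_eq_intros)
    show "(\<phi>' has_real_derivative \<phi>'' t) (at t)"
      unfolding \<phi>'_def \<phi>''_def
      using completely_monotonic_derivs(2)[OF cm t] by (auto intro!: derivative_eq_intros)
  next
    fix t u assume tu: "t \<in> {l..b}" "u \<in> {l..b}" "t \<le> u"
    have "- deriv (deriv g) t \<le> - deriv (deriv g) u"
    proof (rule deriv_nonneg_imp_mono[of t u _ "\<lambda>x. - deriv (deriv (deriv g)) x"])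
      fix v assume "v \<in> {t..u}"
      then have "v > 0" using l tu by simp
      then show "((\<lambda>x. - deriv (deriv g) x) has_real_derivative - deriv (deriv (deriv g)) v) (at v)"
        and "- deriv (deriv (deriv g)) v \<ge> 0"
        using DERIV_minus completely_monotonic_derivs(3,6)[OF cm] by force+
    qed (fact tu(3))
    then show "\<phi>'' u \<le> \<phi>'' t" by (simp add: \<phi>''_def)
  next
    show "\<phi> b = 0"
      using ab by (simp add: \<phi>_def \<kappa>_def)
  qed (use ab l s in \<open>auto simp: \<phi>_def \<phi>'_def\<close>)
  then show ?thesis by (simp add: \<phi>_def)
qed

lemma frame_coefficients_sq_sum:
  fixes D :: "'a::euclidean_space set"
  shows "(\<Sum>b\<in>Basis. \<Sum>c\<in>Basis. (\<Sum>x\<in>D. (x \<bullet> b) * (x \<bullet> c))\<^sup>2) = (\<Sum>x\<in>D. \<Sum>y\<in>D. (x \<bullet> y)\<^sup>2)"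
proof -
  have "(x \<bullet> y)\<^sup>2 = (\<Sum>b\<in>Basis. \<Sum>c\<in>Basis. (x \<bullet> b) * (x \<bullet> c) * ((y \<bullet> b) * (y \<bullet> c)))" for x y :: 'a
    by (simp add: power2_eq_square euclidean_inner[of x y] sum_product algebra_simps)
  then have "(\<Sum>x\<in>D. \<Sum>y\<in>D. (x \<bullet> y)\<^sup>2)
      = (\<Sum>x\<in>D. \<Sum>y\<in>D. \<Sum>b\<in>Basis. \<Sum>c\<in>Basis. (x \<bullet> b) * (x \<bullet> c) * ((y \<bullet> b) * (y \<bullet> c)))"
    by simp
  also have "\<dots> = (\<Sum>b\<in>Basis. \<Sum>c\<in>Basis. \<Sum>x\<in>D. \<Sum>y\<in>D. (x \<bullet> b) * (x \<bullet> c) * ((y \<bullet> b) * (y \<bullet> c)))"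
    by (simp only: sum.swap[where A = D and B = Basis])
  finally show ?thesis
    by (simp add: power2_eq_square sum_product)
qed

text \<open>Cauchy-Schwarz on the diagonal of the frame operator \<open>\<Sum>x. x x\<^sup>T\<close>.\<close>

lemma frame_potential_ge:
  fixes D :: "'a::euclidean_space set"
  shows "(\<Sum>x\<in>D. x \<bullet> x)\<^sup>2 \<le> DIM('a) * (\<Sum>x\<in>D. \<Sum>y\<in>D. (x \<bullet> y)\<^sup>2)"
proof -
  define u where "u b = (\<Sum>x\<in>D. (x \<bullet> b)\<^sup>2)" for b
  have "(\<Sum>x\<in>D. x \<bullet> x) = (\<Sum>b\<in>Basis. u b)"
    unfolding u_def by (simp add: euclidean_inner[of x x for x] power2_eq_square sum.swap[where A = D and B = Basis])
  also have "(\<Sum>b\<in>Basis. u b)\<^sup>2 \<le> DIM('a) * (\<Sum>b\<in>Basis. (u b)\<^sup>2)"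
    using sum_squared_le_sum_of_squares[of u Basis] by (simp add: mult.commute)
  also have "(\<Sum>b\<in>Basis. (u b)\<^sup>2) \<le> (\<Sum>b\<in>Basis. \<Sum>c\<in>Basis. (\<Sum>x\<in>D. (x \<bullet> b) * (x \<bullet> c))\<^sup>2)"
    unfolding u_def power2_eq_square[of "x \<bullet> b" for x b]
    by (intro sum_mono member_le_sum[where f = "\<lambda>c. (\<Sum>x\<in>D. (x \<bullet> _) * (x \<bullet> c))\<^sup>2"]) auto
  finally show ?thesis
    by (simp add: frame_coefficients_sq_sum mult_left_mono)
qed

lemma sum_sum_inner_nonneg:
  fixes D :: "'a::real_inner set"
  shows "(\<Sum>x\<in>D. \<Sum>y\<in>D. x \<bullet> y) \<ge> 0"
proof -
  have "(\<Sum>x\<in>D. \<Sum>y\<in>D. x \<bullet> y) = (\<Sum>x\<in>D. x) \<bullet> (\<Sum>y\<in>D. y)"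
    unfolding inner_sum_left by (simp add: inner_sum_right)
  then show ?thesis by simp
qed

lemma chordal_dist_sq: "(chordal_dist x y)\<^sup>2 = x \<bullet> x + y \<bullet> y - 2 * (x \<bullet> y)"
  unfolding chordal_dist_def power2_norm_eq_inner
  by (simp add: inner_diff_left inner_diff_right inner_commute)

lemma energy_eq_sum_sum:
  assumes "finite D"
  shows "energy g D = (\<Sum>x\<in>D. \<Sum>y\<in>D - {x}. g ((chordal_dist x y)\<^sup>2))"
proof -
  have "{(x, y). x \<in> D \<and> y \<in> D \<and> x \<noteq> y} = Sigma D (\<lambda>x. D - {x})" by auto
  then show ?thesis unfolding energy_def using assms by (simp add: sum.Sigma)
qed

lemma completely_monotonic_pair_bound:
  fixes x y :: "real^4^4"
  assumes cm: "completely_monotonic g" and "x \<bullet> x = 4" "y \<bullet> y = 4" "x \<noteq> y"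
  shows "g 8 - 2 * deriv g 8 * (x \<bullet> y) + (g 16 - g 8 - 8 * deriv g 8) / 16 * (x \<bullet> y)\<^sup>2
    \<le> g ((chordal_dist x y)\<^sup>2)"
proof -
  have dist: "(chordal_dist x y)\<^sup>2 = 8 - 2 * (x \<bullet> y)"
    using assms by (simp add: chordal_dist_sq)
  have "0 < (chordal_dist x y)\<^sup>2"
    using \<open>x \<noteq> y\<close> by (simp add: chordal_dist_def)
  moreover have "\<bar>x \<bullet> y\<bar> \<le> 4"
    using Cauchy_Schwarz_ineq2[of x y] assms by (simp add: norm_eq_sqrt_inner)
  ultimately have bounds: "0 < 8 - 2 * (x \<bullet> y)" "8 - 2 * (x \<bullet> y) \<le> 16"
    using dist by auto
  have "g 8 - 2 * deriv g 8 * (x \<bullet> y) + (g 16 - g 8 - 8 * deriv g 8) / 16 * (x \<bullet> y)\<^sup>2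
      = g 8 + deriv g 8 * (8 - 2 * (x \<bullet> y) - 8)
        + (g 16 - g 8 - deriv g 8 * (16 - 8)) / (16 - 8)\<^sup>2 * (8 - 2 * (x \<bullet> y) - 8)\<^sup>2"
    by (simp add: power2_eq_square)
  also have "\<dots> \<le> g (8 - 2 * (x \<bullet> y))"
    by (rule completely_monotonic_ge_hermite[OF cm _ _ bounds]) simp_all
  finally show ?thesis
    unfolding dist .
qed

lemma energy_ge_cross_polytope:
  fixes D :: "(real^4^4) set"
  assumes cm: "completely_monotonic g"
    and D: "finite D" "card D = 32" "\<And>x. x \<in> D \<Longrightarrow> x \<bullet> x = 4"
  shows "960 * g 8 + 32 * g 16 \<le> energy g D"
proof -
  define \<kappa> where "\<kappa> = (g 16 - g 8 - 8 * deriv g 8) / 16"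
  define H where "H t = g 8 - 2 * deriv g 8 * t + \<kappa> * t\<^sup>2" for t :: real
  define S1 where "S1 = (\<Sum>x\<in>D. \<Sum>y\<in>D. x \<bullet> y)"
  define S2 where "S2 = (\<Sum>x\<in>D. \<Sum>y\<in>D. (x \<bullet> y)\<^sup>2)"
  have "(\<Sum>x\<in>D. x \<bullet> x) = 128"
    using D by simp
  then have "1024 \<le> S2"
    using frame_potential_ge[of D] by (simp add: S2_def)
  moreover have "\<kappa> \<ge> 0"
    using completely_monotonic_above_tangent[OF cm, of 8 16] by (simp add: \<kappa>_def)
  ultimately have quadratic: "\<kappa> * 1024 \<le> \<kappa> * S2"
    by (simp add: mult_left_mono)
  have linear: "2 * deriv g 8 * S1 \<le> 0"
    using completely_monotonic_derivs(4)[OF cm, of 8] sum_sum_inner_nonneg[of D]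
    by (simp add: S1_def mult_nonpos_nonneg)
  have "(\<Sum>x\<in>D. \<Sum>y\<in>D - {x}. H (x \<bullet> y)) = (\<Sum>x\<in>D. (\<Sum>y\<in>D. H (x \<bullet> y)) - H 4)"
    using D by (intro sum.cong refl) (simp add: sum.remove)
  also have "\<dots> = (\<Sum>x\<in>D. \<Sum>y\<in>D. H (x \<bullet> y)) - 32 * H 4"
    using D by (simp add: sum_subtractf)
  also have "(\<Sum>x\<in>D. \<Sum>y\<in>D. H (x \<bullet> y)) = 1024 * g 8 - 2 * deriv g 8 * S1 + \<kappa> * S2"
    using D by (simp add: H_def S1_def S2_def sum.distrib sum_subtractf sum_distrib_left)
  finally have "(\<Sum>x\<in>D. \<Sum>y\<in>D - {x}. H (x \<bullet> y))
      = 1024 * g 8 - 2 * deriv g 8 * S1 + \<kappa> * S2 - 32 * H 4" .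
  moreover have "H 4 = g 16 - 16 * deriv g 8" "\<kappa> * 1024 = 64 * (g 16 - g 8 - 8 * deriv g 8)"
    by (simp_all add: H_def \<kappa>_def field_simps)
  ultimately have "960 * g 8 + 32 * g 16 \<le> (\<Sum>x\<in>D. \<Sum>y\<in>D - {x}. H (x \<bullet> y))"
    using linear quadratic by (smt (verit))
  also have "(\<Sum>x\<in>D. \<Sum>y\<in>D - {x}. H (x \<bullet> y)) \<le> energy g D"
    unfolding energy_eq_sum_sum[OF D(1)] H_def \<kappa>_def
    using D completely_monotonic_pair_bound[OF cm] by (intro sum_mono) auto
  finally show ?thesis .
qed

lemma inner_eq_trace:
  fixes X Y :: "real^'n^'m"
  shows "X \<bullet> Y = (\<Sum>j\<in>UNIV. (transpose X ** Y) $ j $ j)"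
proof -
  have "X \<bullet> Y = (\<Sum>i\<in>UNIV. \<Sum>j\<in>UNIV. X $ i $ j * Y $ i $ j)"
    by (simp add: inner_vec_def)
  also have "\<dots> = (\<Sum>j\<in>UNIV. \<Sum>i\<in>UNIV. X $ i $ j * Y $ i $ j)"
    by (rule sum.swap)
  finally show ?thesis
    by (simp add: matrix_matrix_mult_def transpose_def)
qed

lemma SO4_inner_self: "X \<in> SO4 \<Longrightarrow> X \<bullet> X = 4"
  by (simp add: inner_eq_trace SO4_def mat_def)

lemma energy_cross_polytope:
  fixes C :: "(real^4^4) set"
  assumes C: "finite C" "card C = 32" "\<And>x. x \<in> C \<Longrightarrow> x \<bullet> x = 4"
    and antipodal: "\<And>x. x \<in> C \<Longrightarrow> - x \<in> C"
    and orth: "\<And>x y. x \<in> C \<Longrightarrow> y \<in> C \<Longrightarrow> y \<noteq> x \<Longrightarrow> y \<noteq> - x \<Longrightarrow> x \<bullet> y = 0"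
  shows "energy g C = 960 * g 8 + 32 * g 16"
proof -
  have row: "(\<Sum>y\<in>C - {x}. g ((chordal_dist x y)\<^sup>2)) = g 16 + 30 * g 8" if x: "x \<in> C" for x
  proof -
    have "- x \<noteq> x"
    proof
      assume "- x = x"
      then have "x \<bullet> x = - (x \<bullet> x)"
        by (metis inner_minus_left)
      with C(3)[OF x] show False
        by simp
    qed
    have split: "C - {x} = insert (- x) (C - {x, - x})"
      using antipodal[OF x] \<open>- x \<noteq> x\<close> by auto
    have "card (C - {x, - x}) = 30"
      using C(1,2) x antipodal[OF x] \<open>- x \<noteq> x\<close> by (simp add: card_Diff_subset)
    have "(\<Sum>y\<in>C - {x}. g ((chordal_dist x y)\<^sup>2))
        = g ((chordal_dist x (- x))\<^sup>2) + (\<Sum>y\<in>C - {x, - x}. g ((chordal_dist x y)\<^sup>2))"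
      unfolding split using C(1) by (simp add: sum.insert)
    also have "g ((chordal_dist x (- x))\<^sup>2) = g 16"
      using C(3)[OF x] by (simp add: chordal_dist_sq)
    also have "(\<Sum>y\<in>C - {x, - x}. g ((chordal_dist x y)\<^sup>2)) = (\<Sum>y\<in>C - {x, - x}. g 8)"
    proof (rule sum.cong[OF refl])
      fix y assume "y \<in> C - {x, - x}"
      then have "y \<in> C" "x \<bullet> y = 0"
        using orth[OF x] by auto
      then show "g ((chordal_dist x y)\<^sup>2) = g 8"
        using C(3) x by (simp add: chordal_dist_sq)
    qed
    finally show ?thesis
      using \<open>card (C - {x, - x}) = 30\<close> by simp
  qed
  show ?thesis
    using C(1,2) by (simp add: energy_eq_sum_sum row)
qed

lemma cross_polytope_universally_optimal:
  assumes C: "C \<subseteq> SO4" "finite C" "card C = 32"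
    and antipodal: "\<And>x. x \<in> C \<Longrightarrow> - x \<in> C"
    and orth: "\<And>x y. x \<in> C \<Longrightarrow> y \<in> C \<Longrightarrow> y \<noteq> x \<Longrightarrow> y \<noteq> - x \<Longrightarrow> x \<bullet> y = 0"
  shows "universally_optimal C"
  unfolding universally_optimal_def
proof (intro conjI allI impI)
  fix g :: "real \<Rightarrow> real" and D
  assume cm: "completely_monotonic g" and D: "D \<subseteq> SO4 \<and> finite D \<and> card D = card C"
  have "energy g C = 960 * g 8 + 32 * g 16"
    using C SO4_inner_self by (intro energy_cross_polytope antipodal orth) auto
  also have "\<dots> \<le> energy g D"
    using D C(3) SO4_inner_self by (intro energy_ge_cross_polytope[OF cm]) auto
  finally show "energy g C \<le> energy g D" .
qed (use C in simp_all)

type_synonym quat = "real \<times> real \<times> real \<times> real"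

fun qmult :: "quat \<Rightarrow> quat \<Rightarrow> quat" where
  "qmult (a0, a1, a2, a3) (b0, b1, b2, b3) =
    (a0*b0 - a1*b1 - a2*b2 - a3*b3, a0*b1 + a1*b0 + a2*b3 - a3*b2,
     a0*b2 - a1*b3 + a2*b0 + a3*b1, a0*b3 + a1*b2 - a2*b1 + a3*b0)"

fun qconj :: "quat \<Rightarrow> quat" where
  "qconj (a0, a1, a2, a3) = (a0, -a1, -a2, -a3)"

fun qneg :: "quat \<Rightarrow> quat" where
  "qneg (a0, a1, a2, a3) = (-a0, -a1, -a2, -a3)"

fun qre :: "quat \<Rightarrow> real" where
  "qre (a0, a1, a2, a3) = a0"

definition quat_coord :: "4 \<Rightarrow> quat \<Rightarrow> real" where
  "quat_coord i q = (case q of (q0, q1, q2, q3) \<Rightarrow>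
     if i = 1 then q0 else if i = 2 then q1 else if i = 3 then q2 else q3)"

definition quat_basis :: "4 \<Rightarrow> quat" where
  "quat_basis i = (if i = 1 then (1, 0, 0, 0) else if i = 2 then (0, 1, 0, 0)
     else if i = 3 then (0, 0, 1, 0) else (0, 0, 0, 1))"

definition lmult_mat :: "quat \<Rightarrow> real^4^4" where
  "lmult_mat a = (\<chi> i j. quat_coord i (qmult a (quat_basis j)))"

definition rmult_mat :: "quat \<Rightarrow> real^4^4" where
  "rmult_mat b = (\<chi> i j. quat_coord i (qmult (quat_basis j) b))"

lemmas quat_mat_simps = vec_eq_iff forall_4 sum_4 matrix_matrix_mult_def transpose_def mat_def
  lmult_mat_def rmult_mat_def quat_coord_def quat_basis_def

lemma lmult_mat_mult: "lmult_mat a ** lmult_mat c = lmult_mat (qmult a c)"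
  by (cases a, cases c) (simp add: quat_mat_simps algebra_simps)

lemma rmult_mat_mult: "rmult_mat b ** rmult_mat d = rmult_mat (qmult d b)"
  by (cases b, cases d) (simp add: quat_mat_simps algebra_simps)

lemma lmult_rmult_mat_commute: "lmult_mat a ** rmult_mat b = rmult_mat b ** lmult_mat a"
  by (cases a, cases b) (simp add: quat_mat_simps algebra_simps)

lemma transpose_lmult_mat: "transpose (lmult_mat a) = lmult_mat (qconj a)"
  by (cases a) (simp add: quat_mat_simps)

lemma transpose_rmult_mat: "transpose (rmult_mat a) = rmult_mat (qconj a)"
  by (cases a) (simp add: quat_mat_simps)

lemma trace_lmult_rmult_mat: "(\<Sum>j\<in>UNIV. (lmult_mat u ** rmult_mat v) $ j $ j) = 4 * qre u * qre v"
  by (cases u, cases v) (simp add: quat_mat_simps algebra_simps)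

definition sandwich_mat :: "quat \<Rightarrow> quat \<Rightarrow> real^4^4" where
  "sandwich_mat a b = lmult_mat a ** rmult_mat b"

lemma sandwich_mat_mult: "sandwich_mat a b ** sandwich_mat c d = sandwich_mat (qmult a c) (qmult d b)"
proof -
  have "sandwich_mat a b ** sandwich_mat c d = lmult_mat a ** (rmult_mat b ** lmult_mat c) ** rmult_mat d"
    by (simp add: sandwich_mat_def matrix_mul_assoc)
  also have "\<dots> = (lmult_mat a ** lmult_mat c) ** (rmult_mat b ** rmult_mat d)"
    by (simp add: lmult_rmult_mat_commute[of c b, symmetric] matrix_mul_assoc)
  finally show ?thesis
    by (simp add: lmult_mat_mult rmult_mat_mult sandwich_mat_def)
qed

lemma transpose_sandwich_mat: "transpose (sandwich_mat a b) = sandwich_mat (qconj a) (qconj b)"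
  unfolding sandwich_mat_def matrix_transpose_mul transpose_lmult_mat transpose_rmult_mat
  by (rule lmult_rmult_mat_commute[symmetric])

lemma sandwich_mat_one: "sandwich_mat (1, 0, 0, 0) (1, 0, 0, 0) = mat 1"
proof -
  have "lmult_mat (1, 0, 0, 0) = mat 1" "rmult_mat (1, 0, 0, 0) = mat 1"
    by (simp_all add: quat_mat_simps)
  then show ?thesis
    by (simp add: sandwich_mat_def)
qed

lemma sandwich_mat_qneg_left: "sandwich_mat (qneg a) b = - sandwich_mat a b"
proof -
  have "lmult_mat (qneg a) = - lmult_mat a"
    by (cases a) (simp add: quat_mat_simps)
  then show ?thesis
    by (simp add: sandwich_mat_def matrix_matrix_mult_def vec_eq_iff sum_negf)
qed

lemma sandwich_mat_qneg_right: "sandwich_mat a (qneg b) = - sandwich_mat a b"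
proof -
  have "rmult_mat (qneg b) = - rmult_mat b"
    by (cases b) (simp add: quat_mat_simps)
  then show ?thesis
    by (simp add: sandwich_mat_def matrix_matrix_mult_def vec_eq_iff sum_negf)
qed

lemma inner_sandwich_mat:
  "sandwich_mat a b \<bullet> sandwich_mat c d = 4 * qre (qmult (qconj a) c) * qre (qmult d (qconj b))"
  unfolding inner_eq_trace transpose_sandwich_mat sandwich_mat_mult
  by (simp add: sandwich_mat_def trace_lmult_rmult_mat)

definition Q8 :: "quat set" where
  "Q8 = {(1, 0, 0, 0), (-1, 0, 0, 0), (0, 1, 0, 0), (0, -1, 0, 0),
         (0, 0, 1, 0), (0, 0, -1, 0), (0, 0, 0, 1), (0, 0, 0, -1)}"

text \<open>One element of each pair \<open>\<plusminus>b\<close>: since \<open>(-a) x (-b) = a x b\<close>, the code is parametrised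
  injectively by \<open>Q\<^sub>8 \<times> Q8_reps\<close>.\<close>

definition Q8_reps :: "quat set" where
  "Q8_reps = {(1, 0, 0, 0), (0, 1, 0, 0), (0, 0, 1, 0), (0, 0, 0, 1)}"

lemma Q8_qmult: "a \<in> Q8 \<Longrightarrow> b \<in> Q8 \<Longrightarrow> qmult a b \<in> Q8"
  and Q8_qconj: "a \<in> Q8 \<Longrightarrow> qconj a \<in> Q8"
  and Q8_qneg: "a \<in> Q8 \<Longrightarrow> qneg a \<in> Q8"
  and Q8_qconj_qmult: "a \<in> Q8 \<Longrightarrow> qmult (qconj a) a = (1, 0, 0, 0) \<and> qmult a (qconj a) = (1, 0, 0, 0)"
  and Q8_qre_left: "a \<in> Q8 \<Longrightarrow> c \<in> Q8 \<Longrightarrow> qre (qmult (qconj a) c) \<noteq> 0 \<Longrightarrow> c = a \<or> c = qneg a"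
  and Q8_qre_right: "b \<in> Q8 \<Longrightarrow> d \<in> Q8 \<Longrightarrow> qre (qmult d (qconj b)) \<noteq> 0 \<Longrightarrow> d = b \<or> d = qneg b"
  and Q8_reps_cases: "b \<in> Q8 \<Longrightarrow> b \<in> Q8_reps \<or> qneg b \<in> Q8_reps"
  and Q8_reps_qneg: "b \<in> Q8_reps \<Longrightarrow> qneg b \<notin> Q8_reps"
  and Q8_reps_subset: "Q8_reps \<subseteq> Q8"
  by (auto simp: Q8_def Q8_reps_def)

lemma qre_qmult_qneg: "qre (qmult x (qneg y)) = - qre (qmult x y)"
  by (cases x, cases y) simp

lemma Q8_square: "a \<in> Q8 \<Longrightarrow> \<exists>p. qmult p p = a"
proof -
  define r where "r = 1 / sqrt 2"
  have "r * r = 1 / 2" by (simp add: r_def)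
  then have "qmult (1, 0, 0, 0) (1, 0, 0, 0) = (1, 0, 0, 0)"
    and "qmult (0, 1, 0, 0) (0, 1, 0, 0) = (-1, 0, 0, 0)"
    and "qmult (r, r, 0, 0) (r, r, 0, 0) = (0, 1, 0, 0)"
    and "qmult (r, -r, 0, 0) (r, -r, 0, 0) = (0, -1, 0, 0)"
    and "qmult (r, 0, r, 0) (r, 0, r, 0) = (0, 0, 1, 0)"
    and "qmult (r, 0, -r, 0) (r, 0, -r, 0) = (0, 0, -1, 0)"
    and "qmult (r, 0, 0, r) (r, 0, 0, r) = (0, 0, 0, 1)"
    and "qmult (r, 0, 0, -r) (r, 0, 0, -r) = (0, 0, 0, -1)"
    by simp_all
  then show "a \<in> Q8 \<Longrightarrow> \<exists>p. qmult p p = a"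
    unfolding Q8_def by blast
qed

lemma sandwich_mat_in_SO4:
  assumes "a \<in> Q8" "b \<in> Q8"
  shows "sandwich_mat a b \<in> SO4"
proof -
  have orth: "transpose (sandwich_mat a b) ** sandwich_mat a b = mat 1"
    using Q8_qconj_qmult[OF assms(1)] Q8_qconj_qmult[OF assms(2)]
    by (simp add: transpose_sandwich_mat sandwich_mat_mult sandwich_mat_one)
  then have "(det (sandwich_mat a b))\<^sup>2 = 1"
    by (metis det_I det_mul det_transpose power2_eq_square)
  moreover
  txt \<open>The determinant is nonnegative because every element of \<open>Q\<^sub>8\<close> is a square in \<open>\<bbbH>\<close>.\<close>
  obtain p q where "qmult p p = a" "qmult q q = b"
    using Q8_square assms by metis
  then have "det (sandwich_mat a b) = (det (sandwich_mat p q))\<^sup>2"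
    by (metis det_mul power2_eq_square sandwich_mat_mult)
  ultimately have "det (sandwich_mat a b) = 1"
    by (metis power2_eq_1_iff zero_le_power2 neg_0_le_iff_le zero_less_one not_le)
  with orth show ?thesis
    by (simp add: SO4_def)
qed

lemma sandwich_mat_eqD:
  assumes "a \<in> Q8" "b \<in> Q8_reps" "c \<in> Q8" "d \<in> Q8_reps" "sandwich_mat a b = sandwich_mat c d"
  shows "a = c \<and> b = d"
proof -
  have bd: "b \<in> Q8" "d \<in> Q8"
    using assms Q8_reps_subset by blast+
  have "sandwich_mat a b \<bullet> sandwich_mat c d = 4"
    using assms(5) SO4_inner_self[OF sandwich_mat_in_SO4[OF assms(3) bd(2)]] by simp
  then have re: "qre (qmult (qconj a) c) * qre (qmult d (qconj b)) = 1"
    by (simp add: inner_sandwich_mat)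
  then have "d = b \<or> d = qneg b"
    using Q8_qre_right[OF bd] by fastforce
  then have "d = b"
    using Q8_reps_qneg[OF assms(2)] assms(4) by blast
  then have "qre (qmult (qconj a) c) = 1"
    using re Q8_qconj_qmult[OF bd(1)] by simp
  moreover have "c = a \<or> c = qneg a"
    using Q8_qre_left[OF assms(1,3)] calculation by simp
  ultimately show ?thesis
    using Q8_qconj_qmult[OF assms(1)] \<open>d = b\<close> by (auto simp: qre_qmult_qneg)
qed

definition Q8_code :: "(real^4^4) set" where
  "Q8_code = {sandwich_mat a b | a b. a \<in> Q8 \<and> b \<in> Q8}"

lemma sandwich_mat_in_Q8_code: "a \<in> Q8 \<Longrightarrow> b \<in> Q8 \<Longrightarrow> sandwich_mat a b \<in> Q8_code"
  unfolding Q8_code_def by blast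

lemma Q8_codeE:
  assumes "x \<in> Q8_code"
  obtains a b where "a \<in> Q8" "b \<in> Q8" "x = sandwich_mat a b"
  using assms unfolding Q8_code_def by blast

lemma Q8_code_eq_image: "Q8_code = (\<lambda>(a, b). sandwich_mat a b) ` (Q8 \<times> Q8_reps)"
proof
  show "(\<lambda>(a, b). sandwich_mat a b) ` (Q8 \<times> Q8_reps) \<subseteq> Q8_code"
  proof
    fix x assume "x \<in> (\<lambda>(a, b). sandwich_mat a b) ` (Q8 \<times> Q8_reps)"
    then obtain a b where "a \<in> Q8" "b \<in> Q8_reps" "x = sandwich_mat a b"
      by (auto simp del: split_paired_All split_paired_Ex)
    then show "x \<in> Q8_code"
      using Q8_reps_subset sandwich_mat_in_Q8_code by blast
  qed
next
  show "Q8_code \<subseteq> (\<lambda>(a, b). sandwich_mat a b) ` (Q8 \<times> Q8_reps)"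
  proof
    fix x assume "x \<in> Q8_code"
    then obtain a b where ab: "a \<in> Q8" "b \<in> Q8" "x = sandwich_mat a b"
      by (elim Q8_codeE)
    show "x \<in> (\<lambda>(a, b). sandwich_mat a b) ` (Q8 \<times> Q8_reps)"
    proof (cases "b \<in> Q8_reps")
      case True
      with ab show ?thesis
        by (intro rev_image_eqI[of "(a, b)"]) simp_all
    next
      case False
      then have "qneg a \<in> Q8" "qneg b \<in> Q8_reps"
        using Q8_reps_cases[OF ab(2)] Q8_qneg[OF ab(1)] by blast+
      moreover have "x = sandwich_mat (qneg a) (qneg b)"
        by (simp add: ab(3) sandwich_mat_qneg_left sandwich_mat_qneg_right)
      ultimately show ?thesis
        by (intro rev_image_eqI[of "(qneg a, qneg b)"]) simp_all
    qed
  qed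
qed

lemma inj_on_sandwich_mat: "inj_on (\<lambda>(a, b). sandwich_mat a b) (Q8 \<times> Q8_reps)"
proof (rule inj_onI)
  fix p q
  assume "p \<in> Q8 \<times> Q8_reps" "q \<in> Q8 \<times> Q8_reps"
    and "(\<lambda>(a, b). sandwich_mat a b) p = (\<lambda>(a, b). sandwich_mat a b) q"
  moreover obtain a b c d where "p = (a, b)" "q = (c, d)"
    by (meson prod.exhaust)
  ultimately show "p = q"
    using sandwich_mat_eqD[of a b c d] by simp
qed

lemma card_Q8_code: "card Q8_code = 32"
proof -
  have "card Q8 = 8" "card Q8_reps = 4"
    by (simp_all add: Q8_def Q8_reps_def)
  then show ?thesis
    by (simp add: Q8_code_eq_image card_image[OF inj_on_sandwich_mat] card_cartesian_product)
qed

lemma finite_Q8_code: "finite Q8_code"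
  using card_Q8_code by (intro card_ge_0_finite) simp

lemma Q8_code_SO4: "Q8_code \<subseteq> SO4"
  using sandwich_mat_in_SO4 by (blast elim: Q8_codeE)

lemma one_in_Q8_code: "mat 1 \<in> Q8_code"
proof -
  have "(1, 0, 0, 0) \<in> Q8"
    by (simp add: Q8_def)
  then show ?thesis
    using sandwich_mat_in_Q8_code sandwich_mat_one by metis
qed

lemma Q8_code_mult:
  assumes "x \<in> Q8_code" "y \<in> Q8_code"
  shows "x ** y \<in> Q8_code"
proof -
  obtain a b c d where "a \<in> Q8" "b \<in> Q8" "c \<in> Q8" "d \<in> Q8"
    and "x = sandwich_mat a b" "y = sandwich_mat c d"
    using assms by (elim Q8_codeE)
  then show ?thesis
    by (simp only: sandwich_mat_mult sandwich_mat_in_Q8_code Q8_qmult)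
qed

lemma Q8_code_transpose:
  assumes "x \<in> Q8_code"
  shows "transpose x \<in> Q8_code"
proof -
  obtain a b where "a \<in> Q8" "b \<in> Q8" "x = sandwich_mat a b"
    using assms by (elim Q8_codeE)
  then show ?thesis
    by (simp only: transpose_sandwich_mat sandwich_mat_in_Q8_code Q8_qconj)
qed

lemma Q8_code_uminus:
  assumes "x \<in> Q8_code"
  shows "- x \<in> Q8_code"
proof -
  obtain a b where "a \<in> Q8" "b \<in> Q8" "x = sandwich_mat a b"
    using assms by (elim Q8_codeE)
  then show ?thesis
    by (simp only: sandwich_mat_qneg_left[symmetric] sandwich_mat_in_Q8_code Q8_qneg)
qed

lemma Q8_code_orthogonal:
  assumes "x \<in> Q8_code" "y \<in> Q8_code" "y \<noteq> x" "y \<noteq> - x"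
  shows "x \<bullet> y = 0"
proof (rule ccontr)
  assume "x \<bullet> y \<noteq> 0"
  obtain a b c d where abcd: "a \<in> Q8" "b \<in> Q8" "c \<in> Q8" "d \<in> Q8"
    and xy: "x = sandwich_mat a b" "y = sandwich_mat c d"
    using assms(1,2) by (elim Q8_codeE)
  have "qre (qmult (qconj a) c) \<noteq> 0" "qre (qmult d (qconj b)) \<noteq> 0"
    using \<open>x \<bullet> y \<noteq> 0\<close> unfolding xy inner_sandwich_mat by simp_all
  then have "c = a \<or> c = qneg a" "d = b \<or> d = qneg b"
    using Q8_qre_left Q8_qre_right abcd by blast+
  then have "y = x \<or> y = - x"
    unfolding xy by (elim disjE) (simp_all add: sandwich_mat_qneg_left sandwich_mat_qneg_right)
  with assms(3,4) show False
    by blast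
qed

theorem theorem8p2:
  shows "\<exists>C :: (real^4^4) set. C \<subseteq> SO4 \<and> finite C \<and> card C = 32
     \<and> mat 1 \<in> C \<and> (\<forall>x\<in>C. \<forall>y\<in>C. x ** y \<in> C) \<and> (\<forall>x\<in>C. transpose x \<in> C)
     \<and> universally_optimal C
     \<and> (\<forall>x\<in>C. norm x = 2)
     \<and> (\<forall>x\<in>C. - x \<in> C)
     \<and> (\<forall>x\<in>C. \<forall>y\<in>C. y \<noteq> x \<and> y \<noteq> - x \<longrightarrow> x \<bullet> y = 0)"
proof (intro exI[of _ Q8_code] conjI ballI impI)
  show "universally_optimal Q8_code"
    using Q8_code_SO4 finite_Q8_code card_Q8_code Q8_code_uminus Q8_code_orthogonal
    by (rule cross_polytope_universally_optimal)
  show "norm x = 2" if "x \<in> Q8_code" for x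
    using SO4_inner_self that Q8_code_SO4 by (auto simp: norm_eq_sqrt_inner)
qed (simp_all add: Q8_code_SO4 finite_Q8_code card_Q8_code one_in_Q8_code Q8_code_mult
      Q8_code_transpose Q8_code_uminus Q8_code_orthogonal)

end
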